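(* Let $n>1$ be an integer. Then \[ \mathrm{SL}_2(\mathbb{Z}[1/n])^{\mathrm{ab}} \simeq \begin{cases} 0 & \text{if } 2\mid n,\ 3\mid n,\\ \mathbb{Z}/3 & \text{if } 2\mid n,\ 3\nmid n,\\ \mathbb{Z}/4 & \text{if } 2\nmid n,\ 3\mid n,\\ \mathbb{Z}/12 & \text{if } 2\nmid n,\ 3\nmid n. \end{cases} \]
   Context: For a group $G$, $G^{\mathrm{ab}}=G/[G,G]$; $\mathbb{Z}[1/n]$ is the subring of $\mathbb{Q}$ generated by $1/n$. *)

theory Defs
  imports "HOL-Analysis.Analysis" "HOL-Algebra.Algebra"
begin

definition Zinv :: "nat \<Rightarrow> rat set" where
  "Zinv n = {q. \<exists>(a::int) (k::nat). q = of_int a / of_nat n ^ k}"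

definition SL2_Zinv :: "nat \<Rightarrow> (rat ^ 2 ^ 2) monoid" where
  "SL2_Zinv n = \<lparr> carrier = {A. (\<forall>i j. A $ i $ j \<in> Zinv n) \<and> det A = 1},
                  mult = (\<lambda>A B. A ** B),
                  one = mat 1 \<rparr>"

definition abelianization :: "('a, 'b) monoid_scheme \<Rightarrow> 'a set monoid" where
  "abelianization G = G Mod (derived G (carrier G))"

end

theory Submission
  imports Defs "HOL-Number_Theory.Cong"
begin

text \<open>
  \<open>SL\<^sub>2(\<int>[1/n])\<close> is generated by the elementary matrices \<open>E12 x\<close> and \<open>E21 x\<close>: a Euclidean
  algorithm on the lower left entry, measured by the least natural number of the form \<open>\<bar>x\<bar> n\<^sup>k\<close>,
  reduces every matrix to an upper triangular one. In the abelianization \<open>E21 x\<close> is conjugate to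
  \<open>E12 (-x)\<close> and \<open>E12 x\<close> to \<open>E12 (u\<^sup>2 x)\<close> for every unit \<open>u\<close>, so the class \<open>c\<close> of \<open>E12 1\<close>
  generates it. The rotation \<open>E12 1 E21 (-1) E12 1\<close> has order 4 and class \<open>c\<^sup>3\<close>, so \<open>c\<^sup>1\<^sup>2 = 1\<close>;
  if 2 is a unit then \<open>c\<^sup>4 = c\<close>, and if 3 is a unit then \<open>c\<^sup>9 = c\<close>. Conversely, for \<open>M = 3, 4\<close>
  prime to \<open>n\<close>, reduction modulo \<open>M\<close> followed by an explicit character of \<open>SL\<^sub>2(\<int>/M)\<close> sends
  \<open>E12 1\<close> to a generator of \<open>\<int>/M\<close>; for \<open>M = 12\<close> the two characters combine by the Chinese
  remainder theorem.
\<close>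

definition mat2 :: "rat \<Rightarrow> rat \<Rightarrow> rat \<Rightarrow> rat \<Rightarrow> rat^2^2" where
  "mat2 a b c d = (\<chi> i j. if i = 1 then (if j = 1 then a else b) else (if j = 1 then c else d))"

lemma mat2_nth [simp]:
  "mat2 a b c d $ 1 $ 1 = a" "mat2 a b c d $ 1 $ 2 = b"
  "mat2 a b c d $ 2 $ 1 = c" "mat2 a b c d $ 2 $ 2 = d"
  by (simp_all add: mat2_def)

lemma mat2_entries: "A = mat2 (A $ 1 $ 1) (A $ 1 $ 2) (A $ 2 $ 1) (A $ 2 $ 2)"
  by (simp add: mat2_def vec_eq_iff forall_2)

lemma mat2_eq_iff [simp]:
  "mat2 a b c d = mat2 a' b' c' d' \<longleftrightarrow> a = a' \<and> b = b' \<and> c = c' \<and> d = d'"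
  by (metis mat2_nth)

lemma mat2_mult [simp]:
  "mat2 a b c d ** mat2 a' b' c' d' =
     mat2 (a * a' + b * c') (a * b' + b * d') (c * a' + d * c') (c * b' + d * d')"
  by (simp add: matrix_matrix_mult_def mat2_def vec_eq_iff forall_2 sum_2)

lemma mat_one_eq_mat2: "mat 1 = mat2 1 0 0 1"
  by (simp add: mat_def mat2_def vec_eq_iff forall_2)

definition E12 :: "rat \<Rightarrow> rat^2^2" where "E12 x = mat2 1 x 0 1"
definition E21 :: "rat \<Rightarrow> rat^2^2" where "E21 x = mat2 1 0 x 1"

lemma E12_add: "E12 x ** E12 y = E12 (x + y)"
  by (simp add: E12_def add.commute)

lemma ZinvI: "x = of_int a / of_nat n ^ k \<Longrightarrow> x \<in> Zinv n"
  unfolding Zinv_def by blast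

lemma ZinvE:
  assumes "x \<in> Zinv n"
  obtains a k where "x = of_int a / of_nat n ^ k"
  using assms unfolding Zinv_def by blast

lemma Zinv_of_int [simp]: "of_int a \<in> Zinv n"
  by (rule ZinvI[where k = 0]) simp

lemma Zinv_of_nat [simp]: "of_nat a \<in> Zinv n"
  using Zinv_of_int[of "int a"] by simp

lemma Zinv_numeral [simp]: "numeral k \<in> Zinv n"
  using Zinv_of_nat[of "numeral k"] by simp

lemma Zinv_0 [simp]: "0 \<in> Zinv n" and Zinv_1 [simp]: "1 \<in> Zinv n"
  using Zinv_of_nat[of 0] Zinv_of_nat[of 1] by simp_all

lemma Zinv_add [simp]:
  assumes "n > 0" "x \<in> Zinv n" "y \<in> Zinv n"
  shows "x + y \<in> Zinv n"
proof -
  obtain a k where x: "x = of_int a / of_nat n ^ k" using assms(2) by (rule ZinvE)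
  obtain b l where y: "y = of_int b / of_nat n ^ l" using assms(3) by (rule ZinvE)
  have "x + y = of_int (a * int n ^ l + b * int n ^ k) / of_nat n ^ (k + l)"
    using assms(1) by (simp add: x y field_simps power_add)
  then show ?thesis by (rule ZinvI)
qed

lemma Zinv_mult [simp]:
  assumes "x \<in> Zinv n" "y \<in> Zinv n"
  shows "x * y \<in> Zinv n"
proof -
  obtain a k where x: "x = of_int a / of_nat n ^ k" using assms(1) by (rule ZinvE)
  obtain b l where y: "y = of_int b / of_nat n ^ l" using assms(2) by (rule ZinvE)
  have "x * y = of_int (a * b) / of_nat n ^ (k + l)"
    by (simp add: x y power_add)
  then show ?thesis by (rule ZinvI)
qed

lemma Zinv_uminus [simp]: "x \<in> Zinv n \<Longrightarrow> - x \<in> Zinv n"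
  using Zinv_mult[OF Zinv_of_int[of "-1"]] by simp

lemma Zinv_diff [simp]: "n > 0 \<Longrightarrow> x \<in> Zinv n \<Longrightarrow> y \<in> Zinv n \<Longrightarrow> x - y \<in> Zinv n"
  using Zinv_add[of n x "- y"] by simp

lemma Zinv_inverse_of_dvd:
  assumes "d dvd n" "n > 0"
  shows "1 / of_nat d \<in> Zinv n"
proof -
  obtain t where t: "n = d * t" using assms(1) by blast
  then have "1 / of_nat d = of_int (int t) / (of_nat n ^ 1 :: rat)"
    using assms(2) by simp
  then show ?thesis by (rule ZinvI)
qed

lemma mat2_in_SL2_Zinv [simp]:
  "mat2 a b c d \<in> carrier (SL2_Zinv n) \<longleftrightarrow>
     a \<in> Zinv n \<and> b \<in> Zinv n \<and> c \<in> Zinv n \<and> d \<in> Zinv n \<and> a * d - b * c = 1"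
  by (auto simp: SL2_Zinv_def forall_2 det_2)

lemma E12_in_SL2_Zinv [simp]: "x \<in> Zinv n \<Longrightarrow> E12 x \<in> carrier (SL2_Zinv n)"
  by (simp add: E12_def)

lemma E21_in_SL2_Zinv [simp]: "x \<in> Zinv n \<Longrightarrow> E21 x \<in> carrier (SL2_Zinv n)"
  by (simp add: E21_def)

lemma SL2_Zinv_cases:
  assumes "A \<in> carrier (SL2_Zinv n)"
  obtains a b c d where "A = mat2 a b c d"
    "a \<in> Zinv n" "b \<in> Zinv n" "c \<in> Zinv n" "d \<in> Zinv n" "a * d - b * c = 1"
  using assms by (metis mat2_entries mat2_in_SL2_Zinv)

lemma mult_SL2_Zinv [simp]: "A \<otimes>\<^bsub>SL2_Zinv n\<^esub> B = A ** B"
  by (simp add: SL2_Zinv_def)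

lemma one_SL2_Zinv [simp]: "\<one>\<^bsub>SL2_Zinv n\<^esub> = mat 1"
  by (simp add: SL2_Zinv_def)

lemma group_SL2_Zinv:
  assumes "n > 0"
  shows "group (SL2_Zinv n)"
proof (rule groupI)
  fix A B
  assume "A \<in> carrier (SL2_Zinv n)" "B \<in> carrier (SL2_Zinv n)"
  then obtain a b c d a' b' c' d' where "A = mat2 a b c d" "B = mat2 a' b' c' d'"
    and "a \<in> Zinv n" "b \<in> Zinv n" "c \<in> Zinv n" "d \<in> Zinv n" "a * d - b * c = 1"
    and "a' \<in> Zinv n" "b' \<in> Zinv n" "c' \<in> Zinv n" "d' \<in> Zinv n" "a' * d' - b' * c' = 1"
    by (elim SL2_Zinv_cases)
  moreover have "(a * a' + b * c') * (c * b' + d * d') - (a * b' + b * d') * (c * a' + d * c') =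
      (a * d - b * c) * (a' * d' - b' * c')"
    by (simp add: algebra_simps)
  ultimately show "A \<otimes>\<^bsub>SL2_Zinv n\<^esub> B \<in> carrier (SL2_Zinv n)"
    using assms by simp
next
  fix A
  assume "A \<in> carrier (SL2_Zinv n)"
  then obtain a b c d where A: "A = mat2 a b c d"
    and entries: "a \<in> Zinv n" "b \<in> Zinv n" "c \<in> Zinv n" "d \<in> Zinv n" and det: "a * d - b * c = 1"
    by (rule SL2_Zinv_cases)
  have "mat2 d (- b) (- c) a \<in> carrier (SL2_Zinv n)" "mat2 d (- b) (- c) a ** A = mat 1"
    using entries det by (simp_all add: A mat_one_eq_mat2 algebra_simps)
  then show "\<exists>B \<in> carrier (SL2_Zinv n). B \<otimes>\<^bsub>SL2_Zinv n\<^esub> A = \<one>\<^bsub>SL2_Zinv n\<^esub>"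
    by auto
qed (simp_all add: matrix_mul_assoc matrix_mul_lid, simp add: mat_one_eq_mat2)

definition Zinv_size :: "nat \<Rightarrow> rat \<Rightarrow> nat" where
  "Zinv_size n x = (LEAST m. \<exists>k. \<bar>x\<bar> * of_nat n ^ k = of_nat m)"

lemma Zinv_size_uminus [simp]: "Zinv_size n (- x) = Zinv_size n x"
  by (simp add: Zinv_size_def)

lemma Zinv_size_le: "\<bar>x\<bar> * of_nat n ^ k = of_nat m \<Longrightarrow> Zinv_size n x \<le> m"
  unfolding Zinv_size_def by (rule Least_le) blast

lemma Zinv_size_attained:
  assumes "n > 0" "x \<in> Zinv n"
  obtains k where "\<bar>x\<bar> * of_nat n ^ k = of_nat (Zinv_size n x)"
proof -
  obtain a k where "x = of_int a / of_nat n ^ k" using assms(2) by (rule ZinvE)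
  then have "\<bar>x\<bar> * of_nat n ^ k = of_nat (nat \<bar>a\<bar>)"
    using assms(1) by (simp add: abs_divide)
  then have "\<exists>m k. \<bar>x\<bar> * of_nat n ^ k = of_nat m" by blast
  then have "\<exists>k. \<bar>x\<bar> * of_nat n ^ k = of_nat (Zinv_size n x)"
    unfolding Zinv_size_def by (rule LeastI_ex)
  then show ?thesis using that by blast
qed

lemma Zinv_division:
  assumes n: "n > 0" and a: "a \<in> Zinv n" and c: "c \<in> Zinv n" "c \<noteq> 0"
  obtains q where "q \<in> Zinv n" "Zinv_size n (a - q * c) < Zinv_size n c"
proof -
  obtain k where k: "\<bar>c\<bar> * of_nat n ^ k = of_nat (Zinv_size n c)"
    using n c(1) by (rule Zinv_size_attained)
  define c' :: int where "c' = (if c > 0 then 1 else - 1) * int (Zinv_size n c)"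
  have c': "c * of_nat n ^ k = of_int c'" "\<bar>c'\<bar> = int (Zinv_size n c)"
    using k unfolding c'_def by (cases "c > 0") auto
  with n c(2) have "c' \<noteq> 0" by auto
  obtain a' j where a': "a = of_int a' / of_nat n ^ j" using a by (rule ZinvE)
  define q :: rat where "q = of_int (a' div c' * int n ^ k) / of_nat n ^ j"
  have "a - q * c = of_int (a' - a' div c' * c') / of_nat n ^ j"
    using n by (simp add: a' q_def c'(1)[symmetric] field_simps)
  also have "\<dots> = of_int (a' mod c') / of_nat n ^ j"
    by (simp add: minus_div_mult_eq_mod)
  finally have "\<bar>a - q * c\<bar> * of_nat n ^ j = of_nat (nat \<bar>a' mod c'\<bar>)"
    using n by (simp add: abs_divide)
  then have "Zinv_size n (a - q * c) \<le> nat \<bar>a' mod c'\<bar>"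
    by (rule Zinv_size_le)
  also have "\<dots> < Zinv_size n c"
    using abs_mod_less[OF \<open>c' \<noteq> 0\<close>, of a'] c'(2) by linarith
  finally show ?thesis
    using that ZinvI[OF q_def] by blast
qed

section \<open>Generation by elementary matrices\<close>

definition elementary :: "nat \<Rightarrow> (rat^2^2) set" where
  "elementary n = E12 ` Zinv n \<union> E21 ` Zinv n"

lemma generate_elementary_mult:
  assumes "A \<in> generate (SL2_Zinv n) (elementary n)" "B \<in> generate (SL2_Zinv n) (elementary n)"
  shows "A ** B \<in> generate (SL2_Zinv n) (elementary n)"
  using generate.eng[OF assms] by simp

lemma E12_in_generate_elementary: "x \<in> Zinv n \<Longrightarrow> E12 x \<in> generate (SL2_Zinv n) (elementary n)"
  by (auto intro: generate.incl simp: elementary_def)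

lemma E21_in_generate_elementary: "x \<in> Zinv n \<Longrightarrow> E21 x \<in> generate (SL2_Zinv n) (elementary n)"
  by (auto intro: generate.incl simp: elementary_def)

lemma weyl_in_generate_elementary:
  assumes "u \<in> Zinv n" "v \<in> Zinv n" "u * v = 1"
  shows "mat2 0 u (- v) 0 \<in> generate (SL2_Zinv n) (elementary n)"
proof -
  have "mat2 0 u (- v) 0 = E12 u ** E21 (- v) ** E12 u"
    using assms(3) by (simp add: E12_def E21_def mult.commute)
  then show ?thesis
    using assms
    by (simp add: generate_elementary_mult E12_in_generate_elementary E21_in_generate_elementary)
qed

theorem generate_elementary_SL2_Zinv:
  assumes n: "n > 0"
  shows "generate (SL2_Zinv n) (elementary n) = carrier (SL2_Zinv n)"
proof -
  interpret group "SL2_Zinv n" using n by (rule group_SL2_Zinv)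
  let ?S = "generate (SL2_Zinv n) (elementary n)"
  have weyl_1: "mat2 0 (- 1) 1 0 \<in> ?S"
    using weyl_in_generate_elementary[of "- 1" n "- 1"] by simp
  have "A \<in> ?S" if "A \<in> carrier (SL2_Zinv n)" for A
    using that
  proof (induction "Zinv_size n (A $ 2 $ 1)" arbitrary: A rule: less_induct)
    case less
    from less.prems obtain a b c d where A: "A = mat2 a b c d"
      and entries: "a \<in> Zinv n" "b \<in> Zinv n" "c \<in> Zinv n" "d \<in> Zinv n" and det: "a * d - b * c = 1"
      by (rule SL2_Zinv_cases)
    show "A \<in> ?S"
    proof (cases "c = 0")
      case True
      with det have "a * d = 1" by simp
      then have "A = mat2 0 a (- d) 0 ** mat2 0 (- 1) 1 0 ** E12 (b * d)"
        by (simp add: A E12_def True mult.assoc mult.left_commute[of b])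
      moreover have "mat2 0 a (- d) 0 \<in> ?S" "E12 (b * d) \<in> ?S"
        using entries \<open>a * d = 1\<close>
        by (simp_all add: weyl_in_generate_elementary E12_in_generate_elementary)
      ultimately show ?thesis
        using weyl_1 generate_elementary_mult by metis
    next
      case False
      obtain q where q: "q \<in> Zinv n" "Zinv_size n (a - q * c) < Zinv_size n c"
        using n entries(1,3) False by (rule Zinv_division)
      define A' where "A' = mat2 c d (q * c - a) (q * d - b)"
      have "A' \<in> carrier (SL2_Zinv n)"
        using n entries det q(1) by (simp add: A'_def algebra_simps)
      moreover have "Zinv_size n (A' $ 2 $ 1) < Zinv_size n (A $ 2 $ 1)"
        using q(2) Zinv_size_uminus[of n "a - q * c"] by (simp add: A A'_def)
      ultimately have "A' \<in> ?S" using less.hyps by blast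
      moreover have "A = E12 q ** mat2 0 (- 1) 1 0 ** A'"
        by (simp add: A A'_def E12_def algebra_simps)
      ultimately show ?thesis
        using E12_in_generate_elementary[OF q(1)] weyl_1 generate_elementary_mult by metis
    qed
  qed
  moreover have "elementary n \<subseteq> carrier (SL2_Zinv n)"
    by (auto simp: elementary_def)
  ultimately show ?thesis
    using generate_in_carrier by blast
qed

section \<open>Abelianizations and cyclic quotients\<close>

lemma comm_group_integer_mod_group: "comm_group (integer_mod_group m)"
  by (rule group.group_comm_groupI) (simp_all add: add.commute)

lemma (in group) hom_if_right_mult_generators:
  assumes H: "group H" and gen: "generate G S = carrier G"
    and f: "f \<in> carrier G \<rightarrow> carrier H" "f \<one> = \<one>\<^bsub>H\<^esub>"
    and mult: "\<And>a s. a \<in> carrier G \<Longrightarrow> s \<in> S \<Longrightarrow> f (a \<otimes> s) = f a \<otimes>\<^bsub>H\<^esub> f s"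
  shows "f \<in> hom G H"
proof -
  interpret H: group H by (fact H)
  have S: "S \<subseteq> carrier G"
    unfolding gen[symmetric] by (rule subsetI, rule generate.incl)
  have mult_inv: "f (a \<otimes> inv s) = f a \<otimes>\<^bsub>H\<^esub> inv\<^bsub>H\<^esub> f s"
    if "a \<in> carrier G" "s \<in> S" for a s
  proof -
    have "s \<in> carrier G"
      using that S by blast
    with that f(1) have "f s \<in> carrier H" "f a \<in> carrier H" "f (a \<otimes> inv s) \<in> carrier H"
      by auto
    moreover have "f (a \<otimes> inv s) \<otimes>\<^bsub>H\<^esub> f s = f a"
      using that \<open>s \<in> carrier G\<close> by (simp add: mult[symmetric] m_assoc)
    ultimately show ?thesis
      by (simp add: H.inv_solve_right)
  qed
  have "\<forall>a \<in> carrier G. f (a \<otimes> b) = f a \<otimes>\<^bsub>H\<^esub> f b" if "b \<in> generate G S" for b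
    using that
  proof (induction b rule: generate.induct)
    case one
    then show ?case using f by (auto simp: Pi_def)
  next
    case (incl s)
    then show ?case by (simp add: mult)
  next
    case (inv s)
    have "s \<in> carrier G" "f s \<in> carrier H"
      using inv S f(1) by auto
    then have "f (inv s) = inv\<^bsub>H\<^esub> f s"
      using mult_inv[of \<one> s] inv f(2) by simp
    then show ?case
      using inv by (simp add: mult_inv)
  next
    case (eng b c)
    have "b \<in> carrier G" "c \<in> carrier G"
      using eng.hyps gen by auto
    then show ?case
      using eng.IH f(1) by (auto simp: m_assoc[symmetric] H.m_assoc Pi_def)
  qed
  then show ?thesis
    using gen f(1) by (auto intro: homI)
qed

lemma (in group) derived_subset_kernel:
  assumes H: "comm_group H" and h: "h \<in> hom G H"
  shows "derived G (carrier G) \<subseteq> kernel G H h"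
proof -
  interpret H: comm_group H by (fact H)
  interpret group_hom G H h
    using h by (intro group_hom.intro group_hom_axioms.intro) unfold_locales
  have "h ` derived G (carrier G) = derived H (h ` carrier G)"
    by (simp add: derived_img)
  also have "\<dots> = {\<one>\<^bsub>H\<^esub>}"
    by (rule H.derived_eq_singleton) auto
  finally show ?thesis
    using derived_in_carrier[of "carrier G"] by (auto simp: kernel_def)
qed

lemma (in group) abelianization_iso:
  assumes H: "comm_group H" and h: "h \<in> hom G H" "h ` carrier G = carrier H"
    and ker: "kernel G H h \<subseteq> derived G (carrier G)"
  shows "abelianization G \<cong> H"
proof -
  interpret H: comm_group H by (fact H)
  interpret group_hom G H h
    using h(1) by (intro group_hom.intro group_hom_axioms.intro) unfold_locales
  have "kernel G H h = derived G (carrier G)"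
    using ker derived_subset_kernel[OF H h(1)] by blast
  then show ?thesis
    using FactGroup_iso[OF h(2)] by (simp add: abelianization_def)
qed

lemma (in group) hom_integer_mod_group_surj:
  assumes "m > 0" and f: "f \<in> hom G (integer_mod_group m)"
    and g: "g \<in> carrier G" "f g = 1 mod int m"
  shows "f ` carrier G = carrier (integer_mod_group m)"
proof
  interpret f: group_hom G "integer_mod_group m" f
    using f by (intro group_hom.intro group_hom_axioms.intro is_group group_integer_mod_group)
  show "f ` carrier G \<subseteq> carrier (integer_mod_group m)"
    using f.hom_closed by auto
  show "carrier (integer_mod_group m) \<subseteq> f ` carrier G"
  proof
    fix j
    assume "j \<in> carrier (integer_mod_group m)"
    then have "f (g [^] j) = j"
      using f.hom_int_pow[OF g(1)] g(2) \<open>m > 0\<close>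
      by (simp add: int_pow_integer_mod_group mod_simps carrier_integer_mod_group)
    then show "j \<in> f ` carrier G"
      using g(1) by (metis image_eqI int_pow_closed)
  qed
qed

lemma (in group) abelianization_iso_integer_mod_group:
  fixes m :: nat
  defines "D \<equiv> derived G (carrier G)"
  assumes m: "m > 0" and f: "f \<in> hom G (integer_mod_group m)"
    and g: "g \<in> carrier G" "f g = 1 mod int m"
    and cyclic: "\<And>x. x \<in> carrier G \<Longrightarrow> \<exists>k::int. D #> x = (D #> g) [^]\<^bsub>abelianization G\<^esub> k"
    and ord: "group.ord (abelianization G) (D #> g) dvd m"
  shows "abelianization G \<cong> integer_mod_group m"
proof -
  interpret Ab: comm_group "abelianization G"
    unfolding abelianization_def by (rule derived_quot_is_comm_group)
  interpret f: group_hom G "integer_mod_group m" f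
    using f by (intro group_hom.intro group_hom_axioms.intro is_group group_integer_mod_group)
  interpret cls: group_hom G "abelianization G" "\<lambda>x. D #> x"
    unfolding abelianization_def D_def
    by (intro group_hom.intro group_hom_axioms.intro normal.r_coset_hom_Mod derived_self_is_normal
        is_group derived_quot_is_group)
  have D: "subgroup D G"
    unfolding D_def by (rule derived_is_subgroup) simp
  have f_pow: "f (g [^] k) = k mod int m" for k :: int
    using f.hom_int_pow[OF g(1)] g(2) by (simp add: int_pow_integer_mod_group mod_simps)
  have "kernel G (integer_mod_group m) f \<subseteq> D"
  proof
    fix x
    assume "x \<in> kernel G (integer_mod_group m) f"
    then have x: "x \<in> carrier G" "f x = 0"
      by (auto simp: kernel_def)
    obtain k :: int where "D #> x = (D #> g) [^]\<^bsub>abelianization G\<^esub> k"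
      using cyclic[OF x(1)] by blast
    also have "\<dots> = D #> g [^] k"
      using cls.hom_int_pow[OF g(1)] by simp
    finally have "x \<otimes> inv (g [^] k) \<in> D"
      using subgroup.rcos_module_imp[OF D is_group] rcos_self[OF x(1) D] g(1) by auto
    then have "f (x \<otimes> inv (g [^] k)) = 0"
      using derived_subset_kernel[OF comm_group_integer_mod_group f]
      by (auto simp: D_def kernel_def)
    then have "int m dvd k"
      using x g(1) m f.hom_closed[of "g [^] k"]
      by (simp add: f_pow mod_simps carrier_integer_mod_group mod_eq_0_iff_dvd)
    then have "(D #> g) [^]\<^bsub>abelianization G\<^esub> k = \<one>\<^bsub>abelianization G\<^esub>"
      using ord g(1) by (simp add: Ab.int_pow_eq_id) (meson dvd_trans int_dvd_int_iff)
    then have "D #> x = D"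
      using \<open>D #> x = (D #> g) [^]\<^bsub>abelianization G\<^esub> k\<close>
      by (simp add: abelianization_def D_def)
    then show "x \<in> D"
      using rcos_self[OF x(1) D] by simp
  qed
  moreover have "f ` carrier G = carrier (integer_mod_group m)"
    using m f g by (rule hom_integer_mod_group_surj)
  ultimately show ?thesis
    using abelianization_iso[OF comm_group_integer_mod_group f] by (simp add: D_def)
qed

lemma hom_integer_mod_group_combine:
  fixes u v :: int
  assumes f: "f \<in> hom G (integer_mod_group p)" and g: "g \<in> hom G (integer_mod_group q)"
    and "p > 0" "q > 0" and u: "int q dvd u" and v: "int p dvd v"
  shows "(\<lambda>x. (u * f x + v * g x) mod int (p * q)) \<in> hom G (integer_mod_group (p * q))"
proof -
  have mod_scaled: "(w * (s mod int r)) mod int (r * r') = (w * s) mod int (r * r')"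
    if "int r' dvd w" for w s :: int and r r' :: nat
  proof -
    from that obtain w' where w: "w = int r' * w'" by (rule dvdE)
    have "w * (s mod int r) - w * s = int (r * r') * (- w' * (s div int r))"
      by (simp add: w minus_div_mult_eq_mod[symmetric] algebra_simps)
    then show ?thesis
      by (simp add: mod_eq_dvd_iff)
  qed
  define h where "h = (\<lambda>x. (u * f x + v * g x) mod int (p * q))"
  have "h \<in> hom G (integer_mod_group (p * q))"
  proof (rule homI)
    fix x
    show "h x \<in> carrier (integer_mod_group (p * q))"
      using assms by (simp add: h_def carrier_integer_mod_group)
  next
    fix x y
    assume "x \<in> carrier G" "y \<in> carrier G"
    then have "f (x \<otimes>\<^bsub>G\<^esub> y) = (f x + f y) mod int p" "g (x \<otimes>\<^bsub>G\<^esub> y) = (g x + g y) mod int q"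
      using f g by (simp_all add: hom_mult)
    moreover have "(u * ((f x + f y) mod int p) + v * ((g x + g y) mod int q)) mod int (p * q) =
        (u * (f x + f y) + v * (g x + g y)) mod int (p * q)"
    proof (rule mod_add_cong)
      show "(u * ((f x + f y) mod int p)) mod int (p * q) = (u * (f x + f y)) mod int (p * q)"
        using u by (rule mod_scaled)
      show "(v * ((g x + g y) mod int q)) mod int (p * q) = (v * (g x + g y)) mod int (p * q)"
        using mod_scaled[OF v, of "g x + g y" q] by (simp add: mult.commute)
    qed
    ultimately show "h (x \<otimes>\<^bsub>G\<^esub> y) = h x \<otimes>\<^bsub>integer_mod_group (p * q)\<^esub> h y"
      by (simp add: h_def mod_add_eq) (simp add: algebra_simps)
  qed
  then show ?thesis
    by (simp only: h_def)
qed

section \<open>Characters of \<open>SL\<^sub>2(\<int>[1/n])\<close> through \<open>SL\<^sub>2(\<int>/M)\<close>\<close>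

text \<open>
  The reduction \<open>\<int>[1/n] \<rightarrow> \<int>/M\<close>, given by an integer representative. The choice is meaningful
  only when \<open>n\<close> is invertible modulo \<open>M\<close>.
\<close>

definition Zinv_residue :: "nat \<Rightarrow> nat \<Rightarrow> rat \<Rightarrow> int" where
  "Zinv_residue M n x =
     (SOME r. \<forall>a k. x = of_int a / of_nat n ^ k \<longrightarrow> [a = r * int n ^ k] (mod int M))"

context
  fixes M n :: nat
  assumes n: "n > 0" and coprime: "coprime (int n) (int M)"
begin

lemma Zinv_residue:
  assumes "x \<in> Zinv n" "x = of_int a / of_nat n ^ k"
  shows "[a = Zinv_residue M n x * int n ^ k] (mod int M)"
proof -
  obtain a0 k0 where x0: "x = of_int a0 / of_nat n ^ k0"
    using assms(1) by (rule ZinvE)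
  obtain t where t: "[int n * t = 1] (mod int M)"
    using cong_solve_coprime_int[OF coprime] by blast
  have "[b = a0 * t ^ k0 * int n ^ l] (mod int M)" if "x = of_int b / of_nat n ^ l" for b l
  proof -
    have "of_int (b * int n ^ k0) = (of_int (a0 * int n ^ l) :: rat)"
      using n x0 that by (simp add: field_simps)
    then have "b * int n ^ k0 = a0 * int n ^ l"
      by (simp only: of_int_eq_iff)
    then have "b * (int n * t) ^ k0 = a0 * t ^ k0 * int n ^ l"
      by (simp add: power_mult_distrib ac_simps)
    moreover have "[b * (int n * t) ^ k0 = b * 1 ^ k0] (mod int M)"
      using t by (intro cong_scalar_left cong_pow)
    ultimately show ?thesis
      by (simp add: cong_sym)
  qed
  then have "\<exists>r. \<forall>b l. x = of_int b / of_nat n ^ l \<longrightarrow> [b = r * int n ^ l] (mod int M)"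
    by blast
  then have "\<forall>b l. x = of_int b / of_nat n ^ l \<longrightarrow> [b = Zinv_residue M n x * int n ^ l] (mod int M)"
    unfolding Zinv_residue_def by (rule someI_ex)
  then show ?thesis
    using assms(2) by blast
qed

lemma cong_mult_power_cancel:
  "[u * int n ^ k = v * int n ^ k] (mod int M) \<Longrightarrow> [u = v] (mod int M)"
  using coprime by (simp add: cong_mult_rcancel)

lemma Zinv_residue_of_int: "[Zinv_residue M n (of_int z) = z] (mod int M)"
  using Zinv_residue[of "of_int z" z 0] by (simp add: cong_sym)

lemma Zinv_residue_add:
  assumes "x \<in> Zinv n" "y \<in> Zinv n"
  shows "[Zinv_residue M n (x + y) = Zinv_residue M n x + Zinv_residue M n y] (mod int M)"
proof -
  obtain a k where x: "x = of_int a / of_nat n ^ k" using assms(1) by (rule ZinvE)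
  obtain b l where y: "y = of_int b / of_nat n ^ l" using assms(2) by (rule ZinvE)
  have xy: "x + y = of_int (a * int n ^ l + b * int n ^ k) / of_nat n ^ (k + l)"
    using n by (simp add: x y field_simps power_add)
  have "[Zinv_residue M n (x + y) * int n ^ (k + l) = a * int n ^ l + b * int n ^ k] (mod int M)"
    using Zinv_residue[OF _ xy] assms n by (simp add: cong_sym)
  also have "[a * int n ^ l + b * int n ^ k =
      Zinv_residue M n x * int n ^ k * int n ^ l +
      Zinv_residue M n y * int n ^ l * int n ^ k] (mod int M)"
    using Zinv_residue[OF assms(1) x] Zinv_residue[OF assms(2) y]
    by (intro cong_add cong_scalar_right)
  finally have "[Zinv_residue M n (x + y) * int n ^ (k + l) =
      (Zinv_residue M n x + Zinv_residue M n y) * int n ^ (k + l)] (mod int M)"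
    by (simp add: power_add algebra_simps)
  then show ?thesis
    by (rule cong_mult_power_cancel)
qed

lemma Zinv_residue_mult:
  assumes "x \<in> Zinv n" "y \<in> Zinv n"
  shows "[Zinv_residue M n (x * y) = Zinv_residue M n x * Zinv_residue M n y] (mod int M)"
proof -
  obtain a k where x: "x = of_int a / of_nat n ^ k" using assms(1) by (rule ZinvE)
  obtain b l where y: "y = of_int b / of_nat n ^ l" using assms(2) by (rule ZinvE)
  have xy: "x * y = of_int (a * b) / of_nat n ^ (k + l)"
    by (simp add: x y power_add)
  have "[Zinv_residue M n (x * y) * int n ^ (k + l) = a * b] (mod int M)"
    using Zinv_residue[OF _ xy] assms by (simp add: cong_sym)
  also have "[a * b =
      (Zinv_residue M n x * int n ^ k) * (Zinv_residue M n y * int n ^ l)] (mod int M)"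
    using Zinv_residue[OF assms(1) x] Zinv_residue[OF assms(2) y] by (rule cong_mult)
  finally have "[Zinv_residue M n (x * y) * int n ^ (k + l) =
      (Zinv_residue M n x * Zinv_residue M n y) * int n ^ (k + l)] (mod int M)"
    by (simp add: power_add ac_simps)
  then show ?thesis
    by (rule cong_mult_power_cancel)
qed

end

text \<open>
  \<open>\<kappa> a b c d\<close> is a homomorphism \<open>SL\<^sub>2(\<int>/M) \<rightarrow> \<int>/M\<close>, written on integer representatives of the
  matrix entries: right multiplication by \<open>E12 1\<close> adds 1 and by \<open>E21 1\<close> subtracts 1. Since the
  elementary matrices generate, this is all that is needed to lift it to \<open>SL\<^sub>2(\<int>[1/n])\<close>.
\<close>

locale SL2_character_mod =
  fixes M :: nat and \<kappa> :: "int \<Rightarrow> int \<Rightarrow> int \<Rightarrow> int \<Rightarrow> int"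
  assumes cong: "\<lbrakk>[a = a'] (mod int M); [b = b'] (mod int M);
      [c = c'] (mod int M); [d = d'] (mod int M)\<rbrakk> \<Longrightarrow> \<kappa> a b c d = \<kappa> a' b' c' d'"
    and range: "\<kappa> a b c d \<in> {0..<int M}"
    and identity: "\<kappa> 1 0 0 1 = 0"
    and E12_step: "[a * d - b * c = 1] (mod int M) \<Longrightarrow>
      \<kappa> a (b + a) c (d + c) = (\<kappa> a b c d + 1) mod int M"
    and E21_step: "[a * d - b * c = 1] (mod int M) \<Longrightarrow>
      \<kappa> (a + b) b (c + d) d = (\<kappa> a b c d - 1) mod int M"
begin

lemma mod_self [simp]: "\<kappa> a b c d mod int M = \<kappa> a b c d"
  using range[of a b c d] by simp

lemma E12_iter:
  assumes det: "[a * d - b * c = 1] (mod int M)"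
  shows "\<kappa> a (b + a * t) c (d + c * t) = (\<kappa> a b c d + t) mod int M"
proof (induction t rule: int_induct[where k = 0])
  case base
  show ?case by simp
next
  case (step1 i)
  have "[a * (d + c * i) - (b + a * i) * c = 1] (mod int M)"
    using det by (simp add: algebra_simps)
  then have "\<kappa> a (b + a * i + a) c (d + c * i + c) = (\<kappa> a (b + a * i) c (d + c * i) + 1) mod int M"
    by (rule E12_step)
  with step1.IH show ?case
    by (simp add: algebra_simps mod_simps)
next
  case (step2 i)
  have "[a * (d + c * (i - 1)) - (b + a * (i - 1)) * c = 1] (mod int M)"
    using det by (simp add: algebra_simps)
  then have "\<kappa> a (b + a * (i - 1) + a) c (d + c * (i - 1) + c) =
      (\<kappa> a (b + a * (i - 1)) c (d + c * (i - 1)) + 1) mod int M"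
    by (rule E12_step)
  with step2.IH have "(\<kappa> a (b + a * (i - 1)) c (d + c * (i - 1)) + 1) mod int M =
      (\<kappa> a b c d + i) mod int M"
    by (simp add: algebra_simps)
  then have "((\<kappa> a (b + a * (i - 1)) c (d + c * (i - 1)) + 1) mod int M - 1) mod int M =
      ((\<kappa> a b c d + i) mod int M - 1) mod int M"
    by simp
  then show ?case
    by (simp add: mod_simps algebra_simps)
qed

lemma E21_iter:
  assumes det: "[a * d - b * c = 1] (mod int M)"
  shows "\<kappa> (a + b * t) b (c + d * t) d = (\<kappa> a b c d - t) mod int M"
proof (induction t rule: int_induct[where k = 0])
  case base
  show ?case by simp
next
  case (step1 i)
  have "[(a + b * i) * d - b * (c + d * i) = 1] (mod int M)"
    using det by (simp add: algebra_simps)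
  then have "\<kappa> (a + b * i + b) b (c + d * i + d) d = (\<kappa> (a + b * i) b (c + d * i) d - 1) mod int M"
    by (rule E21_step)
  with step1.IH show ?case
    by (simp add: algebra_simps mod_simps)
next
  case (step2 i)
  have "[(a + b * (i - 1)) * d - b * (c + d * (i - 1)) = 1] (mod int M)"
    using det by (simp add: algebra_simps)
  then have "\<kappa> (a + b * (i - 1) + b) b (c + d * (i - 1) + d) d =
      (\<kappa> (a + b * (i - 1)) b (c + d * (i - 1)) d - 1) mod int M"
    by (rule E21_step)
  with step2.IH have "(\<kappa> (a + b * (i - 1)) b (c + d * (i - 1)) d - 1) mod int M =
      (\<kappa> a b c d - i) mod int M"
    by (simp add: algebra_simps)
  then have "((\<kappa> (a + b * (i - 1)) b (c + d * (i - 1)) d - 1) mod int M + 1) mod int M =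
      ((\<kappa> a b c d - i) mod int M + 1) mod int M"
    by simp
  then show ?case
    by (simp add: mod_simps algebra_simps)
qed

definition lift :: "nat \<Rightarrow> rat^2^2 \<Rightarrow> int" where
  "lift n A = \<kappa> (Zinv_residue M n (A $ 1 $ 1)) (Zinv_residue M n (A $ 1 $ 2))
                (Zinv_residue M n (A $ 2 $ 1)) (Zinv_residue M n (A $ 2 $ 2))"

context
  fixes n :: nat
  assumes n: "n > 0" and coprime: "coprime (int n) (int M)"
begin

lemma Zinv_residue_affine:
  assumes "a \<in> Zinv n" "b \<in> Zinv n" "x \<in> Zinv n"
  shows "[Zinv_residue M n (a + b * x) =
    Zinv_residue M n a + Zinv_residue M n b * Zinv_residue M n x] (mod int M)"
proof -
  have "[Zinv_residue M n (a + b * x) = Zinv_residue M n a + Zinv_residue M n (b * x)] (mod int M)"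
    using assms n coprime by (intro Zinv_residue_add) simp_all
  also have "[Zinv_residue M n a + Zinv_residue M n (b * x) =
      Zinv_residue M n a + Zinv_residue M n b * Zinv_residue M n x] (mod int M)"
    using assms n coprime by (intro cong_add cong_refl Zinv_residue_mult)
  finally show ?thesis .
qed

lemma Zinv_residue_det:
  assumes "a \<in> Zinv n" "b \<in> Zinv n" "c \<in> Zinv n" "d \<in> Zinv n" "a * d - b * c = 1"
  shows "[Zinv_residue M n a * Zinv_residue M n d -
    Zinv_residue M n b * Zinv_residue M n c = 1] (mod int M)"
proof -
  have "[Zinv_residue M n a * Zinv_residue M n d = Zinv_residue M n (a * d)] (mod int M)"
    using assms n coprime by (simp add: Zinv_residue_mult cong_sym)
  also have "a * d = 1 + b * c"
    using assms(5) by simp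
  also have "[Zinv_residue M n (1 + b * c) =
      Zinv_residue M n 1 + Zinv_residue M n b * Zinv_residue M n c] (mod int M)"
    using assms by (intro Zinv_residue_affine) simp_all
  also have "[Zinv_residue M n 1 + Zinv_residue M n b * Zinv_residue M n c =
      1 + Zinv_residue M n b * Zinv_residue M n c] (mod int M)"
    using Zinv_residue_of_int[OF n coprime, of 1] by (intro cong_add cong_refl) simp
  finally show ?thesis
    by (simp add: cong_iff_dvd_diff algebra_simps)
qed

lemma lift_mat2:
  "lift n (mat2 a b c d) =
     \<kappa> (Zinv_residue M n a) (Zinv_residue M n b) (Zinv_residue M n c) (Zinv_residue M n d)"
  by (simp add: lift_def)

lemma lift_one: "lift n (mat 1) = 0"
proof -
  have "[Zinv_residue M n 0 = 0] (mod int M)" "[Zinv_residue M n 1 = 1] (mod int M)"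
    using Zinv_residue_of_int[OF n coprime, of 0] Zinv_residue_of_int[OF n coprime, of 1]
    by simp_all
  then have "lift n (mat 1) = \<kappa> 1 0 0 1"
    unfolding mat_one_eq_mat2 lift_mat2 by (intro cong)
  then show ?thesis
    by (simp add: identity)
qed

lemma lift_mult_E12:
  assumes "A \<in> carrier (SL2_Zinv n)" "x \<in> Zinv n"
  shows "lift n (A ** E12 x) = (lift n A + Zinv_residue M n x) mod int M"
proof -
  obtain a b c d where A: "A = mat2 a b c d"
    and entries: "a \<in> Zinv n" "b \<in> Zinv n" "c \<in> Zinv n" "d \<in> Zinv n" and det: "a * d - b * c = 1"
    using assms(1) by (rule SL2_Zinv_cases)
  have "lift n (A ** E12 x) = lift n (mat2 a (b + a * x) c (d + c * x))"
    by (simp add: A E12_def add.commute)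
  also have "\<dots> = \<kappa> (Zinv_residue M n a)
      (Zinv_residue M n b + Zinv_residue M n a * Zinv_residue M n x) (Zinv_residue M n c)
      (Zinv_residue M n d + Zinv_residue M n c * Zinv_residue M n x)"
    unfolding lift_mat2 using entries assms(2) by (intro cong cong_refl Zinv_residue_affine)
  also have "\<dots> = (lift n A + Zinv_residue M n x) mod int M"
    unfolding A lift_mat2 using entries det by (intro E12_iter Zinv_residue_det)
  finally show ?thesis .
qed

lemma lift_mult_E21:
  assumes "A \<in> carrier (SL2_Zinv n)" "x \<in> Zinv n"
  shows "lift n (A ** E21 x) = (lift n A - Zinv_residue M n x) mod int M"
proof -
  obtain a b c d where A: "A = mat2 a b c d"
    and entries: "a \<in> Zinv n" "b \<in> Zinv n" "c \<in> Zinv n" "d \<in> Zinv n" and det: "a * d - b * c = 1"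
    using assms(1) by (rule SL2_Zinv_cases)
  have "lift n (A ** E21 x) = lift n (mat2 (a + b * x) b (c + d * x) d)"
    by (simp add: A E21_def)
  also have "\<dots> = \<kappa> (Zinv_residue M n a + Zinv_residue M n b * Zinv_residue M n x)
      (Zinv_residue M n b) (Zinv_residue M n c + Zinv_residue M n d * Zinv_residue M n x)
      (Zinv_residue M n d)"
    unfolding lift_mat2 using entries assms(2) by (intro cong cong_refl Zinv_residue_affine)
  also have "\<dots> = (lift n A - Zinv_residue M n x) mod int M"
    unfolding A lift_mat2 using entries det by (intro E21_iter Zinv_residue_det)
  finally show ?thesis .
qed

lemma lift_hom: "lift n \<in> hom (SL2_Zinv n) (integer_mod_group M)"
proof -
  interpret group "SL2_Zinv n"
    using n by (rule group_SL2_Zinv)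
  have E12: "lift n (E12 x) = Zinv_residue M n x mod int M" if "x \<in> Zinv n" for x
    using lift_mult_E12[OF one_closed that] by (simp add: matrix_mul_lid lift_one)
  have E21: "lift n (E21 x) = (- Zinv_residue M n x) mod int M" if "x \<in> Zinv n" for x
    using lift_mult_E21[OF one_closed that] by (simp add: matrix_mul_lid lift_one)
  show ?thesis
  proof (rule hom_if_right_mult_generators[OF group_integer_mod_group])
    show "generate (SL2_Zinv n) (elementary n) = carrier (SL2_Zinv n)"
      using n by (rule generate_elementary_SL2_Zinv)
    show "lift n \<in> carrier (SL2_Zinv n) \<rightarrow> carrier (integer_mod_group M)"
      using range by (auto simp: carrier_integer_mod_group lift_def)
    show "lift n \<one>\<^bsub>SL2_Zinv n\<^esub> = \<one>\<^bsub>integer_mod_group M\<^esub>"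
      by (simp add: lift_one)
  next
    fix A s
    assume "A \<in> carrier (SL2_Zinv n)" "s \<in> elementary n"
    then show "lift n (A \<otimes>\<^bsub>SL2_Zinv n\<^esub> s) = lift n A \<otimes>\<^bsub>integer_mod_group M\<^esub> lift n s"
      by (auto simp: elementary_def lift_mult_E12 lift_mult_E21 E12 E21 mod_simps)
  qed
qed

lemma lift_E12_one: "lift n (E12 1) = 1 mod int M"
proof -
  interpret group "SL2_Zinv n"
    using n by (rule group_SL2_Zinv)
  have "lift n (E12 1) = Zinv_residue M n 1 mod int M"
    using lift_mult_E12[OF one_closed Zinv_1] by (simp add: matrix_mul_lid lift_one)
  also have "\<dots> = 1 mod int M"
    using Zinv_residue_of_int[OF n coprime, of 1] by (simp add: cong_def)
  finally show ?thesis .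
qed

end

end

lemma SL2_character_mod_by_residues:
  fixes \<kappa> :: "int \<Rightarrow> int \<Rightarrow> int \<Rightarrow> int \<Rightarrow> int"
  assumes cong: "\<And>a b c d a' b' c' d'. \<lbrakk>[a = a'] (mod int M); [b = b'] (mod int M);
      [c = c'] (mod int M); [d = d'] (mod int M)\<rbrakk> \<Longrightarrow> \<kappa> a b c d = \<kappa> a' b' c' d'"
    and range: "\<And>a b c d. \<kappa> a b c d \<in> {0..<int M}"
    and identity: "\<kappa> 1 0 0 1 = 0"
    and residues: "\<forall>a \<in> {0..<int M}. \<forall>b \<in> {0..<int M}. \<forall>c \<in> {0..<int M}. \<forall>d \<in> {0..<int M}.
      (a * d - b * c) mod int M = 1 mod int M \<longrightarrow>
        \<kappa> a (b + a) c (d + c) = (\<kappa> a b c d + 1) mod int M \<and>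
        \<kappa> (a + b) b (c + d) d = (\<kappa> a b c d - 1) mod int M"
  shows "SL2_character_mod M \<kappa>"
proof -
  have "M > 0"
    using range[of 0 0 0 0] by simp
  have steps: "\<kappa> a (b + a) c (d + c) = (\<kappa> a b c d + 1) mod int M \<and>
      \<kappa> (a + b) b (c + d) d = (\<kappa> a b c d - 1) mod int M"
    if det: "[a * d - b * c = 1] (mod int M)" for a b c d
  proof -
    define a' b' c' d'
      where "a' = a mod int M" "b' = b mod int M" "c' = c mod int M" "d' = d mod int M"
    have residues': "[a = a'] (mod int M)" "[b = b'] (mod int M)"
      "[c = c'] (mod int M)" "[d = d'] (mod int M)"
      by (simp_all add: a'_b'_c'_d'_def cong_def)
    have "[a' * d' - b' * c' = a * d - b * c] (mod int M)"
      using residues' by (intro cong_diff cong_mult) (simp_all add: cong_sym)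
    with det have "(a' * d' - b' * c') mod int M = 1 mod int M"
      by (simp add: cong_def)
    with residues \<open>M > 0\<close> have "\<kappa> a' (b' + a') c' (d' + c') = (\<kappa> a' b' c' d' + 1) mod int M \<and>
        \<kappa> (a' + b') b' (c' + d') d' = (\<kappa> a' b' c' d' - 1) mod int M"
      by (simp add: a'_b'_c'_d'_def)
    moreover have "\<kappa> a (b + a) c (d + c) = \<kappa> a' (b' + a') c' (d' + c')"
      "\<kappa> (a + b) b (c + d) d = \<kappa> (a' + b') b' (c' + d') d'" "\<kappa> a b c d = \<kappa> a' b' c' d'"
      by (intro cong cong_add residues')+
    ultimately show ?thesis
      by simp
  qed
  show ?thesis
    by unfold_locales (use cong range identity steps in auto)
qed

definition chi3 :: "int \<Rightarrow> int \<Rightarrow> int \<Rightarrow> int \<Rightarrow> int" where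
  "chi3 a b c d = (b * d * (1 - c ^ 2) + (a + d) * c) mod 3"

definition chi4 :: "int \<Rightarrow> int \<Rightarrow> int \<Rightarrow> int \<Rightarrow> int" where
  "chi4 a b c d = (if odd c then c * (a + d + 1) else b * d + 1 - a + c * (b + 1)) mod 4"

lemma chi3_cong:
  assumes "[a = a'] (mod 3)" "[b = b'] (mod 3)" "[c = c'] (mod 3)" "[d = d'] (mod 3)"
  shows "chi3 a b c d = chi3 a' b' c' d'"
proof -
  have "[b * d * (1 - c ^ 2) + (a + d) * c = b' * d' * (1 - c' ^ 2) + (a' + d') * c'] (mod 3)"
    using assms by (intro cong_add cong_mult cong_diff cong_pow cong_refl)
  then show ?thesis
    by (simp add: chi3_def cong_def)
qed

lemma chi4_cong:
  assumes "[a = a'] (mod 4)" "[b = b'] (mod 4)" "[c = c'] (mod 4)" "[d = d'] (mod 4)"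
  shows "chi4 a b c d = chi4 a' b' c' d'"
proof -
  have "odd c \<longleftrightarrow> odd c'"
    using assms(3) unfolding cong_def by presburger
  moreover have "[c * (a + d + 1) = c' * (a' + d' + 1)] (mod 4)"
    using assms by (intro cong_add cong_mult cong_refl)
  moreover have "[b * d + 1 - a + c * (b + 1) = b' * d' + 1 - a' + c' * (b' + 1)] (mod 4)"
    using assms by (intro cong_add cong_mult cong_diff cong_refl)
  ultimately show ?thesis
    by (simp add: chi4_def cong_def)
qed

interpretation chi3: SL2_character_mod 3 chi3
proof (rule SL2_character_mod_by_residues)
  fix a b c d a' b' c' d' :: int
  assume "[a = a'] (mod int 3)" "[b = b'] (mod int 3)" "[c = c'] (mod int 3)" "[d = d'] (mod int 3)"
  then show "chi3 a b c d = chi3 a' b' c' d'"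
    by (intro chi3_cong) simp_all
next
  have "{0..<int 3} = {0, 1, 2}"
    by auto
  then show "\<forall>a \<in> {0..<int 3}. \<forall>b \<in> {0..<int 3}. \<forall>c \<in> {0..<int 3}. \<forall>d \<in> {0..<int 3}.
      (a * d - b * c) mod int 3 = 1 mod int 3 \<longrightarrow>
        chi3 a (b + a) c (d + c) = (chi3 a b c d + 1) mod int 3 \<and>
        chi3 (a + b) b (c + d) d = (chi3 a b c d - 1) mod int 3"
    unfolding chi3_def by (simp only:) code_simp
qed (simp_all add: chi3_def)

interpretation chi4: SL2_character_mod 4 chi4
proof (rule SL2_character_mod_by_residues)
  fix a b c d a' b' c' d' :: int
  assume "[a = a'] (mod int 4)" "[b = b'] (mod int 4)" "[c = c'] (mod int 4)" "[d = d'] (mod int 4)"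
  then show "chi4 a b c d = chi4 a' b' c' d'"
    by (intro chi4_cong) simp_all
next
  have "{0..<int 4} = {0, 1, 2, 3}"
    by auto
  then show "\<forall>a \<in> {0..<int 4}. \<forall>b \<in> {0..<int 4}. \<forall>c \<in> {0..<int 4}. \<forall>d \<in> {0..<int 4}.
      (a * d - b * c) mod int 4 = 1 mod int 4 \<longrightarrow>
        chi4 a (b + a) c (d + c) = (chi4 a b c d + 1) mod int 4 \<and>
        chi4 (a + b) b (c + d) d = (chi4 a b c d - 1) mod int 4"
    unfolding chi4_def by (simp only:) code_simp
qed (simp_all add: chi4_def)

section \<open>The abelianization of \<open>SL\<^sub>2(\<int>[1/n])\<close>\<close>

definition ab_order :: "nat \<Rightarrow> nat" where
  "ab_order n = (if 2 dvd n \<and> 3 dvd n then 1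
     else if 2 dvd n \<and> \<not> 3 dvd n then 3
     else if \<not> 2 dvd n \<and> 3 dvd n then 4
     else 12)"

lemma ab_order_cases: "ab_order n \<in> {1, 3, 4, 12}"
  by (simp add: ab_order_def)

lemma coprime_ab_order: "coprime (int n) (int (ab_order n))"
  using prime_imp_coprime[of "3::nat" n] coprime_power_right_iff[of n 2 2]
    coprime_mult_right_iff[of n 3 4]
  by (auto simp: ab_order_def ac_simps)

locale SL2_Zinv_abelianization =
  fixes n :: nat
  assumes n_pos: "n > 0"
begin

sublocale SL: group "SL2_Zinv n"
  using n_pos by (rule group_SL2_Zinv)

abbreviation Ab :: "(rat^2^2) set monoid" where
  "Ab \<equiv> abelianization (SL2_Zinv n)"

sublocale Ab: comm_group Ab
  unfolding abelianization_def by (rule SL.derived_quot_is_comm_group)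

definition cls :: "rat^2^2 \<Rightarrow> (rat^2^2) set" where
  "cls A = derived (SL2_Zinv n) (carrier (SL2_Zinv n)) #>\<^bsub>SL2_Zinv n\<^esub> A"

sublocale cls: group_hom "SL2_Zinv n" Ab cls
  unfolding cls_def abelianization_def
  by (intro group_hom.intro group_hom_axioms.intro normal.r_coset_hom_Mod SL.derived_self_is_normal
      SL.is_group SL.derived_quot_is_group)

lemma mult_closed [simp]:
  "A \<in> carrier (SL2_Zinv n) \<Longrightarrow> B \<in> carrier (SL2_Zinv n) \<Longrightarrow> A ** B \<in> carrier (SL2_Zinv n)"
  using SL.m_closed by simp

lemma cls_mult:
  "A \<in> carrier (SL2_Zinv n) \<Longrightarrow> B \<in> carrier (SL2_Zinv n) \<Longrightarrow> cls (A ** B) = cls A \<otimes>\<^bsub>Ab\<^esub> cls B"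
  using cls.hom_mult by simp

lemma cls_conj:
  assumes "A \<in> carrier (SL2_Zinv n)" "B \<in> carrier (SL2_Zinv n)" "C \<in> carrier (SL2_Zinv n)"
    and "B ** C = mat 1"
  shows "cls (B ** A ** C) = cls A"
proof -
  have "cls (B ** A ** C) = cls A \<otimes>\<^bsub>Ab\<^esub> (cls B \<otimes>\<^bsub>Ab\<^esub> cls C)"
    using assms(1-3) by (simp add: cls_mult Ab.m_ac)
  also have "cls B \<otimes>\<^bsub>Ab\<^esub> cls C = \<one>\<^bsub>Ab\<^esub>"
    using assms(2-4) cls.hom_one by (simp flip: cls_mult)
  finally show ?thesis
    using assms(1) by simp
qed

lemma cls_E12_add:
  "x \<in> Zinv n \<Longrightarrow> y \<in> Zinv n \<Longrightarrow> cls (E12 (x + y)) = cls (E12 x) \<otimes>\<^bsub>Ab\<^esub> cls (E12 y)"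
  using cls_mult[of "E12 x" "E12 y"] by (simp add: E12_add)

lemma cls_E21: "x \<in> Zinv n \<Longrightarrow> cls (E21 x) = cls (E12 (- x))"
  using cls_conj[of "E12 (- x)" "mat2 0 1 (- 1) 0" "mat2 0 (- 1) 1 0"]
  by (simp add: E12_def E21_def mat_one_eq_mat2)

lemma cls_E12_unit_square:
  assumes "u \<in> Zinv n" "v \<in> Zinv n" "u * v = 1" "x \<in> Zinv n"
  shows "cls (E12 (u\<^sup>2 * x)) = cls (E12 x)"
proof -
  have "mat2 u 0 0 v ** E12 x ** mat2 v 0 0 u = E12 (u\<^sup>2 * x)"
    using assms(3) by (simp add: E12_def power2_eq_square ac_simps)
  moreover have "mat2 u 0 0 v ** mat2 v 0 0 u = mat 1"
    using assms(3) by (simp add: mat_one_eq_mat2 mult.commute)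
  ultimately show ?thesis
    using assms cls_conj[of "E12 x" "mat2 u 0 0 v" "mat2 v 0 0 u"] by (simp add: mult.commute)
qed

lemma cls_E12_of_int: "cls (E12 (of_int k)) = cls (E12 1) [^]\<^bsub>Ab\<^esub> k"
proof -
  have "(\<lambda>k. cls (E12 (of_int k))) \<in> hom integer_group Ab"
    by (rule homI) (simp_all add: cls_E12_add)
  then interpret E12_int: group_hom integer_group Ab "\<lambda>k. cls (E12 (of_int k))"
    by (intro group_hom.intro group_hom_axioms.intro group_integer_group Ab.is_group)
  show ?thesis
    using E12_int.hom_int_pow[of 1 k] by simp
qed

lemma cls_E12_eq_pow:
  assumes "x \<in> Zinv n"
  shows "\<exists>k::int. cls (E12 x) = cls (E12 1) [^]\<^bsub>Ab\<^esub> k"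
proof -
  obtain a j where x: "x = of_int a / of_nat n ^ j"
    using assms by (rule ZinvE)
  have "(of_nat n ^ j)\<^sup>2 * x = of_int (a * int n ^ j)"
    using n_pos by (simp add: x power2_eq_square)
  moreover have "of_nat n ^ j \<in> Zinv n"
    using Zinv_of_nat[of "n ^ j"] by simp
  moreover have "1 / of_nat n ^ j \<in> Zinv n"
    by (rule ZinvI[where a = 1]) simp
  ultimately have "cls (E12 x) = cls (E12 (of_int (a * int n ^ j)))"
    using cls_E12_unit_square[of "of_nat n ^ j" "1 / of_nat n ^ j" x] assms n_pos by simp
  then show ?thesis
    using cls_E12_of_int by metis
qed

theorem cls_eq_pow:
  assumes "A \<in> carrier (SL2_Zinv n)"
  shows "\<exists>k::int. cls A = cls (E12 1) [^]\<^bsub>Ab\<^esub> k"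
proof -
  have c: "cls (E12 1) \<in> carrier Ab"
    by simp
  have elementary: "elementary n \<subseteq> carrier (SL2_Zinv n)"
    by (auto simp: elementary_def)
  have "cls (E12 x) \<in> generate Ab {cls (E12 1)}" if "x \<in> Zinv n" for x
    using cls_E12_eq_pow[OF that] unfolding Ab.generate_pow[OF c] by blast
  then have "cls ` elementary n \<subseteq> generate Ab {cls (E12 1)}"
    by (auto simp: elementary_def cls_E21)
  then have "generate Ab (cls ` elementary n) \<subseteq> generate Ab {cls (E12 1)}"
    by (intro Ab.generate_subgroup_incl Ab.generate_is_subgroup) (use c in auto)
  moreover have "cls A \<in> generate Ab (cls ` elementary n)"
    using assms cls.generate_img[OF elementary] generate_elementary_SL2_Zinv[OF n_pos] by auto
  ultimately show ?thesis
    using Ab.generate_pow[OF c] by blast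
qed

lemma ord_dvd_12: "Ab.ord (cls (E12 1)) dvd 12"
proof -
  define W where "W = E12 1 ** E21 (- 1) ** E12 1"
  have W: "W \<in> carrier (SL2_Zinv n)" "W ** W ** W ** W = mat 1"
    by (simp_all add: W_def E12_def E21_def mat_one_eq_mat2)
  have "cls W = cls (E12 1) [^]\<^bsub>Ab\<^esub> (3::nat)"
    by (simp add: W_def cls_mult cls_E21 numeral_3_eq_3)
  have "cls (E12 1) [^]\<^bsub>Ab\<^esub> (12::nat) = (cls (E12 1) [^]\<^bsub>Ab\<^esub> (3::nat)) [^]\<^bsub>Ab\<^esub> (4::nat)"
    by (simp add: Ab.nat_pow_pow)
  also have "\<dots> = cls (W ** W ** W ** W)"
    using W(1) \<open>cls W = cls (E12 1) [^]\<^bsub>Ab\<^esub> (3::nat)\<close> by (simp add: cls_mult numeral_eq_Suc)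
  also have "\<dots> = \<one>\<^bsub>Ab\<^esub>"
    using W(2) cls.hom_one by simp
  finally show ?thesis
    by (simp add: Ab.pow_eq_id)
qed

lemma ord_dvd_if_unit:
  assumes "1 / of_nat p \<in> Zinv n" "p > 0"
  shows "Ab.ord (cls (E12 1)) dvd p\<^sup>2 - 1"
proof -
  have "cls (E12 ((of_nat p)\<^sup>2 * 1)) = cls (E12 1)"
    using assms by (intro cls_E12_unit_square[of _ "1 / of_nat p"]) simp_all
  then have "cls (E12 1) [^]\<^bsub>Ab\<^esub> (int (p\<^sup>2)) = cls (E12 1) [^]\<^bsub>Ab\<^esub> (1::int)"
    using cls_E12_of_int[of "int (p\<^sup>2)"] cls_E12_of_int[of 1] by simp
  then have "int (Ab.ord (cls (E12 1))) dvd 1 - int (p\<^sup>2)"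
    by (subst (asm) Ab.int_pow_eq) simp_all
  then have "int (Ab.ord (cls (E12 1))) dvd int (p\<^sup>2 - 1)"
    using assms(2) by (simp add: dvd_diff_commute of_nat_diff)
  then show ?thesis
    by (simp only: int_dvd_int_iff)
qed

lemma ord_dvd_ab_order: "Ab.ord (cls (E12 1)) dvd ab_order n"
proof -
  have ord_3: "Ab.ord (cls (E12 1)) dvd 3" if "2 dvd n"
    using ord_dvd_if_unit[of 2] Zinv_inverse_of_dvd[OF that] n_pos by simp
  have ord_8: "Ab.ord (cls (E12 1)) dvd 8" if "3 dvd n"
    using ord_dvd_if_unit[of 3] Zinv_inverse_of_dvd[OF that] n_pos by simp
  have "Ab.ord (cls (E12 1)) dvd 3 * 3 - 8" if "2 dvd n" "3 dvd n"
    using that ord_3 ord_8 by (intro dvd_diff_nat dvd_mult2)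
  moreover have "Ab.ord (cls (E12 1)) dvd 12 - 8" if "3 dvd n"
    using that ord_dvd_12 ord_8 by (intro dvd_diff_nat)
  ultimately show ?thesis
    using ord_3 ord_dvd_12 by (auto simp: ab_order_def)
qed

lemma ex_hom_integer_mod_group:
  assumes m: "m \<in> {1, 3, 4, 12}" and coprime: "coprime (int n) (int m)"
  shows "\<exists>f \<in> hom (SL2_Zinv n) (integer_mod_group m). f (E12 1) = 1 mod int m"
proof -
  have lift3: "chi3.lift n \<in> hom (SL2_Zinv n) (integer_mod_group 3)" "chi3.lift n (E12 1) = 1"
    if "coprime (int n) 3"
    using chi3.lift_hom[OF n_pos] chi3.lift_E12_one[OF n_pos] that by simp_all
  have lift4: "chi4.lift n \<in> hom (SL2_Zinv n) (integer_mod_group 4)" "chi4.lift n (E12 1) = 1"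
    if "coprime (int n) 4"
    using chi4.lift_hom[OF n_pos] chi4.lift_E12_one[OF n_pos] that by simp_all
  consider (m1) "m = 1" | (m3) "m = 3" | (m4) "m = 4" | (m12) "m = 12"
    using m by blast
  then show ?thesis
  proof cases
    case m1
    have "(\<lambda>A. 0) \<in> hom (SL2_Zinv n) (integer_mod_group 1)"
      by (rule homI) (simp_all add: carrier_integer_mod_group)
    with m1 show ?thesis by auto
  next
    case m3
    with lift3 coprime show ?thesis by auto
  next
    case m4
    with lift4 coprime show ?thesis by auto
  next
    case m12
    with coprime have "coprime (int n) 3" "coprime (int n) 4"
      using coprime_mult_right_iff[of "int n" 3 4] by simp_all
    \<comment> \<open>\<open>-8\<close> and \<open>9\<close> are the idempotents of \<open>\<int>/12 = \<int>/3 \<times> \<int>/4\<close>\<close>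
    then have "(\<lambda>A. (- 8 * chi3.lift n A + 9 * chi4.lift n A) mod int (3 * 4))
        \<in> hom (SL2_Zinv n) (integer_mod_group (3 * 4))"
      using lift3 lift4 by (intro hom_integer_mod_group_combine) simp_all
    moreover have "(- 8 * chi3.lift n (E12 1) + 9 * chi4.lift n (E12 1)) mod int (3 * 4) = 1"
      using lift3 lift4 \<open>coprime (int n) 3\<close> \<open>coprime (int n) 4\<close> by simp
    ultimately show ?thesis
      using m12 by auto
  qed
qed

end

theorem mainTheorem4:
  fixes n :: nat
  assumes "n > 1"
  shows "abelianization (SL2_Zinv n) \<cong>
           integer_mod_group
             (if 2 dvd n \<and> 3 dvd n then 1
              else if 2 dvd n \<and> \<not> 3 dvd n then 3
              else if \<not> 2 dvd n \<and> 3 dvd n then 4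
              else 12)"
proof -
  interpret SL2_Zinv_abelianization n
    \<comment> \<open>only \<open>n > 0\<close> is needed; for \<open>n = 1\<close> the argument gives \<open>SL\<^sub>2(\<int>)\<^sup>a\<^sup>b = \<int>/12\<close>\<close>
    using assms by unfold_locales simp
  obtain f where "f \<in> hom (SL2_Zinv n) (integer_mod_group (ab_order n))"
    and "f (E12 1) = 1 mod int (ab_order n)"
    using ex_hom_integer_mod_group[OF ab_order_cases coprime_ab_order] by blast
  then have "Ab \<cong> integer_mod_group (ab_order n)"
    using ab_order_cases[of n] ord_dvd_ab_order cls_eq_pow
    by (intro SL.abelianization_iso_integer_mod_group[where f = f and g = "E12 1"])
      (auto simp flip: cls_def)
  then show ?thesis
    by (simp add: ab_order_def)
qed

end
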